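(* Let $K$ be any continuous function on $\mathbb{T}$ satisfying $K(x)\ge1$ for $x\in[-\tfrac14,\tfrac14]$, and let $f$ be a pdf supported on $[-\tfrac14,\tfrac14]$. Then $$\|f*f\|_\infty\ge\|f*f\|_2^2\ge\|\hat K\|_{4/3}^{-4}.$$
   Context: $\mathbb{T}=\mathbb{R}/\mathbb{Z}$; integrals are over $\mathbb{T}$ with Lebesgue measure. For $h\in L^1(\mathbb{T})$ and $j\in\mathbb{Z}$, $\hat h(j)=\int h(x)e^{-2\pi ijx}\,dx$. Convolution $f*g(c)=\int f(x)g(c-x)\,dx$. $\|h\|_p=(\int|h|^p)^{1/p}$, $\|h\|_\infty$ is the essential supremum, and for the coefficient sequence $\|\hat K\|_p=(\sum_{j\in\mathbb{Z}}|\hat K(j)|^p)^{1/p}$. A pdf is a nonnegative function in $L^2(\mathbb{T})$ with integral 1; $[-\tfrac14,\tfrac14]$ is regarded as a subset of $\mathbb{T}$. *)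

theory Defs
  imports "HOL-Analysis.Analysis" "HOL-Probability.Essential_Supremum"
begin

text \<open>Functions on the torus T = R/Z are represented as 1-periodic functions on the reals;
  integrals over T are Lebesgue integrals over the fundamental domain [0,1].\<close>

definition periodic1 :: "(real \<Rightarrow> 'a) \<Rightarrow> bool" where
  "periodic1 h \<longleftrightarrow> (\<forall>x. h (x + 1) = h x)"

definition tconv :: "(real \<Rightarrow> real) \<Rightarrow> (real \<Rightarrow> real) \<Rightarrow> real \<Rightarrow> real" where
  "tconv f g c = (LINT x|lebesgue_on {0..1}. f x * g (c - x))"

definition fourier_coeff :: "(real \<Rightarrow> real) \<Rightarrow> int \<Rightarrow> complex" where
  "fourier_coeff h j =
     (LINT x|lebesgue_on {0..1}. complex_of_real (h x) * exp (- (2 * complex_of_real pi * \<i> * of_int j * complex_of_real x)))"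

definition tLp_norm :: "real \<Rightarrow> (real \<Rightarrow> real) \<Rightarrow> real" where
  "tLp_norm p h = (LINT x|lebesgue_on {0..1}. \<bar>h x\<bar> powr p) powr (1 / p)"

definition tLinf_norm :: "(real \<Rightarrow> real) \<Rightarrow> ereal" where
  "tLinf_norm h = esssup (lebesgue_on {0..1}) (\<lambda>x. ereal \<bar>h x\<bar>)"

text \<open>l^p norm of a coefficient sequence, defined when the sum converges.\<close>
definition lp_summable :: "real \<Rightarrow> (int \<Rightarrow> complex) \<Rightarrow> bool" where
  "lp_summable p c \<longleftrightarrow> (\<lambda>j. norm (c j) powr p) summable_on UNIV"

definition lp_norm :: "real \<Rightarrow> (int \<Rightarrow> complex) \<Rightarrow> real" where
  "lp_norm p c = (\<Sum>\<^sub>\<infinity>j. norm (c j) powr p) powr (1 / p)"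

definition is_pdf :: "(real \<Rightarrow> real) \<Rightarrow> bool" where
  "is_pdf f \<longleftrightarrow> periodic1 f \<and> f \<in> borel_measurable borel
     \<and> (AE x in lebesgue_on {0..1}. f x \<ge> 0)
     \<and> integrable (lebesgue_on {0..1}) (\<lambda>x. (f x)\<^sup>2)
     \<and> (LINT x|lebesgue_on {0..1}. f x) = 1"

text \<open>Supported on [-1/4,1/4] (as a subset of T): vanishes a.e. on (1/4,3/4).\<close>
definition supported_quarter :: "(real \<Rightarrow> real) \<Rightarrow> bool" where
  "supported_quarter f \<longleftrightarrow> (AE x in lebesgue_on {0..1}. x \<in> {1/4<..<3/4} \<longrightarrow> f x = 0)"

end

(*
  Write g = f * f. Since g >= 0 and \<integral>g = (\<integral>f)^2 = 1, we get \<integral>g^2 <= ||g||_\<infinity> \<integral>g = ||g||_\<infinity>.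

  For the second bound, the support of f and K >= 1 on [-1/4, 1/4] give 1 <= \<integral>f K.
  Continuous periodic functions are uniform limits of trigonometric polynomials
  (Stone-Weierstrass on the circle), so by the best-approximation property of Fourier
  sums K is an L^2 limit of its partial Fourier sums, and \<integral>f K is a limit of finite sums
  \<Sum> K^(j) f^(-j). As g^ = (f^)^2, Bessel's inequality for g gives \<Sum>|f^(j)|^4 <= ||g||_2^2,
  and Hoelder's inequality with exponents 4 and 4/3 yields 1 <= ||g||_2^(1/2) ||K^||_(4/3).
*)

theory Submission
  imports Defs
begin

section \<open>Characters of the circle\<close>

definition tchar :: "int \<Rightarrow> real \<Rightarrow> complex" where
  "tchar j x = exp (2 * complex_of_real pi * \<i> * of_int j * complex_of_real x)"

definition cfourier_coeff :: "(real \<Rightarrow> complex) \<Rightarrow> int \<Rightarrow> complex" where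
  "cfourier_coeff h j = (LINT x|lebesgue_on {0..1}. h x * tchar (-j) x)"

lemma fourier_coeff_eq_cfourier_coeff:
  "fourier_coeff g = cfourier_coeff (\<lambda>x. complex_of_real (g x))"
  by (simp add: fourier_coeff_def cfourier_coeff_def tchar_def fun_eq_iff)

lemma tchar_mult: "tchar j x * tchar k x = tchar (j + k) x"
  by (simp add: tchar_def exp_add[symmetric] algebra_simps)

lemma tchar_add: "tchar j (x + y) = tchar j x * tchar j y"
  by (simp add: tchar_def exp_add[symmetric] algebra_simps)

lemma cnj_tchar: "cnj (tchar j x) = tchar (-j) x"
  by (simp add: tchar_def exp_cnj)

lemma norm_tchar [simp]: "norm (tchar j x) = 1"
  by (simp add: tchar_def norm_exp_eq_Re)

lemma tchar_0 [simp]: "tchar 0 x = 1"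
  by (simp add: tchar_def)

lemma tchar_1 [simp]: "tchar j 1 = 1"
  using exp_integer_2pi[of "of_int j"] by (simp add: tchar_def algebra_simps)

lemma tchar_eq_cis: "tchar j x = cis (2 * pi * of_int j * x)"
  by (simp add: tchar_def cis_conv_exp mult_ac)

lemma periodic1_tchar: "periodic1 (tchar j)"
  by (simp add: periodic1_def tchar_add)

lemma continuous_on_tchar [continuous_intros]: "continuous_on S (tchar j)"
  unfolding tchar_def by (intro continuous_intros)

lemma borel_measurable_tchar [measurable]: "tchar j \<in> borel_measurable borel"
  by (intro borel_measurable_continuous_onI continuous_on_tchar)

lemma borel_measurable_lebesgue_onI: "h \<in> borel_measurable borel \<Longrightarrow> h \<in> borel_measurable (lebesgue_on S)"
  by (intro measurable_restrict_space1 measurable_completion) simp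

lemma borel_measurable_tchar_lebesgue_on [measurable]: "tchar j \<in> borel_measurable (lebesgue_on S)"
  by (intro borel_measurable_lebesgue_onI borel_measurable_tchar)

lemma integral_tchar: "(LINT x|lebesgue_on {0..1}. tchar j x) = (if j = 0 then 1 else 0)"
proof (cases "j = 0")
  case False
  define a where "a = 2 * complex_of_real pi * \<i> * of_int j"
  have "a \<noteq> 0" using False by (simp add: a_def)
  have deriv: "((\<lambda>x. exp (a * complex_of_real x) / a) has_vector_derivative tchar j x) (at x within {0..1})"
    for x
  proof -
    have "((\<lambda>z. exp (a * z) / a) has_field_derivative exp (a * complex_of_real x)) (at (complex_of_real x))"
      using \<open>a \<noteq> 0\<close> by (auto intro!: derivative_eq_intros)
    from has_vector_derivative_real_field[OF this] show ?thesis by (simp add: tchar_def a_def)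
  qed
  have "(tchar j has_integral (exp (a * complex_of_real 1) / a - exp (a * complex_of_real 0) / a)) {0..1}"
    by (rule fundamental_theorem_of_calculus) (auto intro: deriv)
  moreover have "exp (a * complex_of_real 1) = 1" using tchar_1[of j] by (simp add: tchar_def a_def)
  moreover have "integrable (lebesgue_on {0..1}) (tchar j)"
    by (intro continuous_imp_integrable_real continuous_on_tchar)
  ultimately show ?thesis
    using False lebesgue_integral_eq_integral[of "{0..1}" "tchar j"] by (simp add: integral_unique)
qed (simp add: measure_restrict_space)

section \<open>Integrals of periodic functions\<close>

lemma integrable_lebesgue_on_01_bounded:
  fixes h :: "real \<Rightarrow> 'a::{banach, second_countable_topology}"
  assumes "h \<in> borel_measurable (lebesgue_on {0..1})" "\<And>x. norm (h x) \<le> B"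
  shows "integrable (lebesgue_on {0..1}) h"
  using finite_measure.integrable_const_bound[OF finite_measure_lebesgue_on, of "{0..1}" h B] assms
  by simp

lemma integrable_mult_bounded:
  fixes f K :: "'a \<Rightarrow> real"
  assumes f_int: "integrable M f" and [measurable]: "K \<in> borel_measurable M"
    and K_bound: "\<And>x. \<bar>K x\<bar> \<le> B"
  shows "integrable M (\<lambda>x. f x * K x)"
proof (rule Bochner_Integration.integrable_bound[where f = "\<lambda>x. B * f x"])
  have [measurable]: "f \<in> borel_measurable M" using f_int by (rule borel_measurable_integrable)
  show "(\<lambda>x. f x * K x) \<in> borel_measurable M" by measurable
  have "\<bar>f x * K x\<bar> \<le> \<bar>B * f x\<bar>" for x
    using K_bound[of x] by (simp add: abs_mult mult.commute[of B] mult_left_mono)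
  then show "AE x in M. norm (f x * K x) \<le> norm (B * f x)" by simp
qed (use f_int in simp)

lemma integrable_if_square_integrable:
  fixes h :: "'a \<Rightarrow> real"
  assumes "finite_measure M" "h \<in> borel_measurable M" "integrable M (\<lambda>x. (h x)\<^sup>2)"
  shows "integrable M h"
proof (rule Bochner_Integration.integrable_bound)
  show "integrable M (\<lambda>x. 1 + (h x)\<^sup>2)"
    using assms finite_measure.integrable_const by (intro Bochner_Integration.integrable_add) auto
  have "\<bar>t\<bar> \<le> 1 + t\<^sup>2" for t :: real
    using sum_squares_bound[of 1 "\<bar>t\<bar>"] by (simp add: power2_eq_square)
  then show "AE x in M. norm (h x) \<le> norm (1 + (h x)\<^sup>2)" by simp
qed fact

lemma integral_lebesgue_on_eq_set_integral:
  fixes h :: "real \<Rightarrow> 'a::{banach, second_countable_topology}"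
  assumes [measurable]: "h \<in> borel_measurable borel" "S \<in> sets borel"
  shows "integrable (lebesgue_on S) h \<longleftrightarrow> set_integrable lborel S h"
    and "integral\<^sup>L (lebesgue_on S) h = (LINT x:S|lborel. h x)"
proof -
  have S: "S \<inter> space lebesgue \<in> sets lebesgue" by simp
  show "integrable (lebesgue_on S) h \<longleftrightarrow> set_integrable lborel S h"
    unfolding integrable_restrict_space[OF S] set_integrable_def
    by (rule integrable_completion) measurable
  show "integral\<^sup>L (lebesgue_on S) h = (LINT x:S|lborel. h x)"
    unfolding integral_restrict_space[OF S] set_lebesgue_integral_def
    by (rule integral_completion) measurable
qed

lemma periodic1_add_of_int:
  assumes "periodic1 h" shows "h (x + of_int k) = h x"
proof -
  have step: "h (y + 1) = h y" for y using assms by (simp add: periodic1_def)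
  show ?thesis
  proof (induction k rule: int_induct[where k = 0])
    case (step1 i)
    then show ?case using step[of "x + of_int i"] by (simp add: add.assoc)
  next
    case (step2 i)
    then show ?case using step[of "x + of_int (i - 1)"] by (simp add: algebra_simps)
  qed simp
qed

lemma continuous_periodic1_bounded:
  fixes K :: "real \<Rightarrow> real"
  assumes "continuous_on UNIV K" "periodic1 K"
  obtains B where "\<And>x. \<bar>K x\<bar> \<le> B"
proof -
  have "compact (K ` {0..1})"
    by (intro compact_continuous_image continuous_on_subset[OF assms(1)]) auto
  then obtain B where B: "\<And>x. x \<in> {0..1} \<Longrightarrow> \<bar>K x\<bar> \<le> B"
    using compact_imp_bounded bounded_real by (metis image_eqI)
  have "\<bar>K x\<bar> \<le> B" for x
    using B[of "frac x"] periodic1_add_of_int[OF assms(2), of "frac x" "\<lfloor>x\<rfloor>"]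
      frac_ge_0[of x] frac_lt_1[of x]
    by (simp add: frac_def)
  then show ?thesis using that by blast
qed

lemma periodic1_set_integral_shift:
  fixes h :: "real \<Rightarrow> 'a::{banach, second_countable_topology}"
  assumes [measurable]: "h \<in> borel_measurable borel" and "periodic1 h"
  shows "set_integrable lborel {u + of_int k..v + of_int k} h \<longleftrightarrow> set_integrable lborel {u..v} h"
    and "(LINT x:{u + of_int k..v + of_int k}|lborel. h x) = (LINT x:{u..v}|lborel. h x)"
proof -
  have eq: "(\<lambda>x. indicator {u + of_int k..v + of_int k} (of_int k + 1 * x) *\<^sub>R h (of_int k + 1 * x))
      = (\<lambda>x. indicator {u..v} x *\<^sub>R h x)"
    using periodic1_add_of_int[OF assms(2)] by (auto simp: fun_eq_iff indicator_def add.commute)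
  show "set_integrable lborel {u + of_int k..v + of_int k} h \<longleftrightarrow> set_integrable lborel {u..v} h"
    using lborel_integrable_real_affine_iff[of 1 "\<lambda>x. indicator {u + of_int k..v + of_int k} x *\<^sub>R h x" "of_int k"]
    unfolding set_integrable_def eq by simp
  show "(LINT x:{u + of_int k..v + of_int k}|lborel. h x) = (LINT x:{u..v}|lborel. h x)"
    using lborel_integral_real_affine[of 1 "\<lambda>x. indicator {u + of_int k..v + of_int k} x *\<^sub>R h x" "of_int k"]
    unfolding set_lebesgue_integral_def eq by simp
qed

(* Cut [a, a + 1] at the integer n = ceiling a and translate both pieces back into [0, 1]. *)

lemma periodic1_set_integral_unit_interval:
  fixes h :: "real \<Rightarrow> 'a::{banach, second_countable_topology}"
  assumes [measurable]: "h \<in> borel_measurable borel" and per: "periodic1 h"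
    and int: "set_integrable lborel {0..1} h"
  shows "set_integrable lborel {a..a+1} h"
    and "(LINT x:{a..a+1}|lborel. h x) = (LINT x:{0..1}|lborel. h x)"
proof -
  define n where "n = \<lceil>a\<rceil>"
  define b where "b = a + 1 - of_int n"
  have "a \<le> of_int n" "of_int n < a + 1" unfolding n_def by linarith+
  then have b: "0 < b" "b \<le> 1" unfolding b_def by linarith+
  have left: "{a..of_int n} = {b + of_int (n - 1)..1 + of_int (n - 1)}"
    and right: "{of_int n..a+1} = {0 + of_int n..b + of_int n}" unfolding b_def by auto
  have int_b1: "set_integrable lborel {b..1} h" and int_0b: "set_integrable lborel {0..b} h"
    using b by (auto intro: set_integrable_subset[OF int])
  have int_left: "set_integrable lborel {a..of_int n} h"
    and int_right: "set_integrable lborel {of_int n..a+1} h"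
    unfolding left right periodic1_set_integral_shift(1)[OF assms(1,2)] by (fact int_b1 int_0b)+
  have split: "{a..a+1} = {a..of_int n} \<union> {of_int n..a+1}" and split01: "{0..1} = {0..b} \<union> {b..1}"
    using \<open>a \<le> of_int n\<close> \<open>of_int n < a + 1\<close> b by auto
  have null: "AE x in lborel. \<not> (x \<in> {s..t} \<and> x \<in> {t..r})" for s t r :: real
    using AE_lborel_singleton[of t] by eventually_elim auto
  show "set_integrable lborel {a..a+1} h"
    unfolding split by (intro set_integrable_Un int_left int_right) auto
  have "(LINT x:{a..a+1}|lborel. h x) = (LINT x:{a..of_int n}|lborel. h x) + (LINT x:{of_int n..a+1}|lborel. h x)"
    unfolding split by (intro set_integral_Un_AE null int_left int_right) auto
  also have "\<dots> = (LINT x:{b..1}|lborel. h x) + (LINT x:{0..b}|lborel. h x)"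
    unfolding left right periodic1_set_integral_shift(2)[OF assms(1,2)] ..
  also have "\<dots> = (LINT x:{0..1}|lborel. h x)"
    unfolding split01 by (subst set_integral_Un_AE[OF null]) (auto intro: int_0b int_b1)
  finally show "(LINT x:{a..a+1}|lborel. h x) = (LINT x:{0..1}|lborel. h x)" .
qed

lemma periodic1_integral_reflect:
  fixes h :: "real \<Rightarrow> 'a::{banach, second_countable_topology}"
  assumes [measurable]: "h \<in> borel_measurable borel" and per: "periodic1 h"
    and int: "integrable (lebesgue_on {0..1}) h"
  shows "integrable (lebesgue_on {0..1}) (\<lambda>x. h (c - x))"
    and "(LINT x|lebesgue_on {0..1}. h (c - x)) = integral\<^sup>L (lebesgue_on {0..1}) h"
proof -
  have eq: "(\<lambda>x. indicator {0..1} (c + (-1) * x) *\<^sub>R h (c - (c + (-1) * x)))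
      = (\<lambda>x. indicator {c-1..c-1+1} x *\<^sub>R h x)"
    by (auto simp: fun_eq_iff indicator_def)
  have hc [measurable]: "(\<lambda>x. h (c - x)) \<in> borel_measurable borel" by measurable
  note to_lborel = integral_lebesgue_on_eq_set_integral[of _ "{0..1}", simplified]
  note unit = periodic1_set_integral_unit_interval[OF assms(1,2), of "c - 1"]
  have int01: "set_integrable lborel {0..1} h" using int to_lborel(1)[OF assms(1)] by simp
  show "integrable (lebesgue_on {0..1}) (\<lambda>x. h (c - x))"
    using unit(1)[OF int01]
      lborel_integrable_real_affine_iff[of "-1" "\<lambda>x. indicator {0..1} x *\<^sub>R h (c - x)" c]
    unfolding to_lborel(1)[of "\<lambda>x. h (c - x)", OF hc] set_integrable_def eq
    by simp
  show "(LINT x|lebesgue_on {0..1}. h (c - x)) = integral\<^sup>L (lebesgue_on {0..1}) h"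
    using unit(2)[OF int01]
      lborel_integral_real_affine[of "-1" "\<lambda>x. indicator {0..1} x *\<^sub>R h (c - x)" c]
    unfolding to_lborel(2)[OF assms(1)] to_lborel(2)[of "\<lambda>x. h (c - x)", OF hc]
      set_lebesgue_integral_def eq
    by simp
qed

lemma periodic1_integral_translate:
  fixes h :: "real \<Rightarrow> 'a::{banach, second_countable_topology}"
  assumes [measurable]: "h \<in> borel_measurable borel" and per: "periodic1 h"
    and int: "integrable (lebesgue_on {0..1}) h"
  shows "integrable (lebesgue_on {0..1}) (\<lambda>x. h (x - c))"
    and "(LINT x|lebesgue_on {0..1}. h (x - c)) = integral\<^sup>L (lebesgue_on {0..1}) h"
proof -
  define h' where "h' x = h (0 - x)" for x
  have [measurable]: "h' \<in> borel_measurable borel" unfolding h'_def by measurable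
  have "periodic1 h'"
    using periodic1_add_of_int[OF per, of "- x - 1" 1 for x] by (simp add: periodic1_def h'_def)
  moreover have "integrable (lebesgue_on {0..1}) h'"
    unfolding h'_def by (rule periodic1_integral_reflect(1)[OF assms])
  moreover have "(\<lambda>x. h (x - c)) = (\<lambda>x. h' (c - x))" by (simp add: h'_def fun_eq_iff)
  moreover have "integral\<^sup>L (lebesgue_on {0..1}) h' = integral\<^sup>L (lebesgue_on {0..1}) h"
    unfolding h'_def by (rule periodic1_integral_reflect(2)[OF assms])
  ultimately show "integrable (lebesgue_on {0..1}) (\<lambda>x. h (x - c))"
    and "(LINT x|lebesgue_on {0..1}. h (x - c)) = integral\<^sup>L (lebesgue_on {0..1}) h"
    using periodic1_integral_reflect[of h'] by simp_all
qed

section \<open>Convolution\<close>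

lemma abs_mult_le_half_sum_squares: "\<bar>a * b\<bar> \<le> (a\<^sup>2 + b\<^sup>2) / (2::real)"
  using sum_squares_bound[of "\<bar>a\<bar>" "\<bar>b\<bar>"] by (simp add: abs_mult)

lemma AE_periodic1_reflect_nonneg:
  fixes h :: "real \<Rightarrow> real"
  assumes [measurable]: "h \<in> borel_measurable borel" and per: "periodic1 h"
    and nonneg: "AE x in lebesgue_on {0..1}. 0 \<le> h x"
  shows "AE x in lebesgue_on {0..1}. 0 \<le> h (c - x)"
proof -
  define neg :: "real \<Rightarrow> real" where "neg y = indicator {y. h y < 0} y" for y
  have [measurable]: "neg \<in> borel_measurable borel" unfolding neg_def by measurable
  have "periodic1 neg" using per by (simp add: periodic1_def neg_def indicator_def)
  have int: "integrable (lebesgue_on {0..1}) neg"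
    by (rule integrable_lebesgue_on_01_bounded[of _ 1])
       (auto simp: neg_def indicator_def intro: borel_measurable_lebesgue_onI)
  have "AE x in lebesgue_on {0..1}. neg x = 0"
    using nonneg by eventually_elim (simp add: neg_def)
  then have "integral\<^sup>L (lebesgue_on {0..1}) neg = 0"
    using integral_nonneg_eq_0_iff_AE[OF int] by (simp add: neg_def)
  then have "(LINT x|lebesgue_on {0..1}. neg (c - x)) = 0"
    using periodic1_integral_reflect(2)[OF _ \<open>periodic1 neg\<close> int] by simp
  then have "AE x in lebesgue_on {0..1}. neg (c - x) = 0"
    using integral_nonneg_eq_0_iff_AE[OF periodic1_integral_reflect(1)[OF _ \<open>periodic1 neg\<close> int]]
    by (simp add: neg_def)
  then show ?thesis by eventually_elim (auto simp: neg_def indicator_def split: if_splits)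
qed

lemma periodic1_square_integral_reflect:
  fixes h :: "real \<Rightarrow> real"
  assumes [measurable]: "h \<in> borel_measurable borel" and per: "periodic1 h"
    and int: "integrable (lebesgue_on {0..1}) (\<lambda>x. (h x)\<^sup>2)"
  shows "integrable (lebesgue_on {0..1}) (\<lambda>x. (h (c - x))\<^sup>2)"
    and "(LINT x|lebesgue_on {0..1}. (h (c - x))\<^sup>2) = (LINT x|lebesgue_on {0..1}. (h x)\<^sup>2)"
  using periodic1_integral_reflect[of "\<lambda>x. (h x)\<^sup>2"] per int by (simp_all add: periodic1_def)

context
  fixes f g :: "real \<Rightarrow> real"
  assumes f_borel [measurable]: "f \<in> borel_measurable borel" and g_borel [measurable]: "g \<in> borel_measurable borel"
begin

lemma borel_measurable_tconv [measurable]: "tconv f g \<in> borel_measurable borel"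
proof -
  have "tconv f g = (\<lambda>c. LINT x:{0..1}|lborel. f x * g (c - x))"
    unfolding tconv_def fun_eq_iff
    by (intro allI integral_lebesgue_on_eq_set_integral(2)) measurable
  then show ?thesis
    unfolding set_lebesgue_integral_def by (simp only:) (rule lborel.borel_measurable_lebesgue_integral, measurable)
qed

lemma tconv_nonneg:
  assumes "periodic1 g"
    and "AE x in lebesgue_on {0..1}. 0 \<le> f x" and "AE x in lebesgue_on {0..1}. 0 \<le> g x"
  shows "0 \<le> tconv f g c"
proof -
  have "AE x in lebesgue_on {0..1}. 0 \<le> f x * g (c - x)"
    using assms(2) AE_periodic1_reflect_nonneg[OF g_borel assms(1,3), of c]
    by eventually_elim (rule mult_nonneg_nonneg)
  then show ?thesis unfolding tconv_def by (rule integral_nonneg_AE)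
qed

context
  assumes per: "periodic1 g"
    and f_sq: "integrable (lebesgue_on {0..1}) (\<lambda>x. (f x)\<^sup>2)"
    and g_sq: "integrable (lebesgue_on {0..1}) (\<lambda>x. (g x)\<^sup>2)"
begin

lemma integrable_tconv_integrand: "integrable (lebesgue_on {0..1}) (\<lambda>x. f x * g (c - x))"
proof (rule Bochner_Integration.integrable_bound)
  show "integrable (lebesgue_on {0..1}) (\<lambda>x. ((f x)\<^sup>2 + (g (c - x))\<^sup>2) / 2)"
    using f_sq periodic1_square_integral_reflect(1)[OF g_borel per g_sq] by auto
  show "AE x in lebesgue_on {0..1}. norm (f x * g (c - x)) \<le> norm (((f x)\<^sup>2 + (g (c - x))\<^sup>2) / 2)"
    using abs_mult_le_half_sum_squares by (simp add: abs_mult)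
qed (intro borel_measurable_lebesgue_onI, measurable)

lemma abs_tconv_le:
  "\<bar>tconv f g c\<bar> \<le> ((LINT x|lebesgue_on {0..1}. (f x)\<^sup>2) + (LINT x|lebesgue_on {0..1}. (g x)\<^sup>2)) / 2"
proof -
  have "\<bar>tconv f g c\<bar> \<le> (LINT x|lebesgue_on {0..1}. ((f x)\<^sup>2 + (g (c - x))\<^sup>2) / 2)"
    unfolding tconv_def
    using Bochner_Integration.integral_norm_bound_integral[OF integrable_tconv_integrand,
        of "\<lambda>x. ((f x)\<^sup>2 + (g (c - x))\<^sup>2) / 2"]
      f_sq periodic1_square_integral_reflect(1)[OF g_borel per g_sq] abs_mult_le_half_sum_squares
    by auto
  also have "\<dots> = ((LINT x|lebesgue_on {0..1}. (f x)\<^sup>2) + (LINT x|lebesgue_on {0..1}. (g x)\<^sup>2)) / 2"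
    using f_sq periodic1_square_integral_reflect[OF g_borel per g_sq] by simp
  finally show ?thesis .
qed

end

end

lemma integrable_mult_tchar:
  fixes h :: "real \<Rightarrow> complex"
  assumes "integrable (lebesgue_on {0..1}) h"
  shows "integrable (lebesgue_on {0..1}) (\<lambda>x. h x * tchar k x)"
proof (rule Bochner_Integration.integrable_bound[OF assms])
  have [measurable]: "h \<in> borel_measurable (lebesgue_on {0..1})"
    using assms by (rule borel_measurable_integrable)
  show "(\<lambda>x. h x * tchar k x) \<in> borel_measurable (lebesgue_on {0..1})" by measurable
qed (simp add: norm_mult)

lemma cfourier_coeff_translate:
  fixes h :: "real \<Rightarrow> complex"
  assumes [measurable]: "h \<in> borel_measurable borel" and "periodic1 h"
    and int: "integrable (lebesgue_on {0..1}) h"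
  shows "integrable (lebesgue_on {0..1}) (\<lambda>c. h (c - x) * tchar (-j) c)"
    and "cfourier_coeff (\<lambda>c. h (c - x)) j = cfourier_coeff h j * tchar (-j) x"
proof -
  define h' where "h' y = h y * tchar (-j) y" for y
  have [measurable]: "h' \<in> borel_measurable borel" unfolding h'_def by measurable
  have "periodic1 h'"
    using \<open>periodic1 h\<close> periodic1_tchar by (simp add: periodic1_def h'_def)
  moreover have "integrable (lebesgue_on {0..1}) h'"
    unfolding h'_def by (rule integrable_mult_tchar[OF int])
  ultimately have tr: "integrable (lebesgue_on {0..1}) (\<lambda>c. h' (c - x))"
      "(LINT c|lebesgue_on {0..1}. h' (c - x)) = cfourier_coeff h j"
    using periodic1_integral_translate[of h'] by (simp_all add: cfourier_coeff_def h'_def[abs_def])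
  have eq: "(\<lambda>c. h (c - x) * tchar (-j) c) = (\<lambda>c. h' (c - x) * tchar (-j) x)"
    by (simp add: fun_eq_iff h'_def mult.assoc tchar_add[symmetric])
  show "integrable (lebesgue_on {0..1}) (\<lambda>c. h (c - x) * tchar (-j) c)"
    unfolding eq using tr(1) by simp
  show "cfourier_coeff (\<lambda>c. h (c - x)) j = cfourier_coeff h j * tchar (-j) x"
    unfolding cfourier_coeff_def eq integral_mult_left_zero tr(2)[unfolded cfourier_coeff_def] ..
qed

context
  fixes f g :: "real \<Rightarrow> real"
  assumes f_borel [measurable]: "f \<in> borel_measurable borel" and g_borel [measurable]: "g \<in> borel_measurable borel"
    and per: "periodic1 g"
    and f_int: "integrable (lebesgue_on {0..1}) f" and g_int: "integrable (lebesgue_on {0..1}) g"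
begin

(* Fubini is applied on lborel \<Otimes> lborel, the unit square being encoded by indicators. *)

private definition kernel :: "int \<Rightarrow> real \<Rightarrow> real \<Rightarrow> complex" where
  "kernel j x c = indicator {0..1} x *\<^sub>R indicator {0..1} c *\<^sub>R
     (complex_of_real (f x * g (c - x)) * tchar (-j) c)"

private lemma kernel_inner:
  "integrable lborel (kernel j x)"
  "integral\<^sup>L lborel (kernel j x) = indicator {0..1} x *\<^sub>R (complex_of_real (f x) * tchar (-j) x) * fourier_coeff g j"
proof -
  let ?g = "\<lambda>c. complex_of_real (g c)"
  have "periodic1 ?g" using per by (simp add: periodic1_def)
  note tr = cfourier_coeff_translate[of ?g, OF _ this _, of x j]
  have "integrable (lebesgue_on {0..1}) ?g" using g_int by simp
  note tr = tr[OF _ this]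
  have eq: "kernel j x = (\<lambda>c. (indicator {0..1} x *\<^sub>R complex_of_real (f x))
      * (indicator {0..1} c *\<^sub>R (?g (c - x) * tchar (-j) c)))"
    by (simp add: fun_eq_iff kernel_def mult_ac)
  note to_lborel = integral_lebesgue_on_eq_set_integral[of "\<lambda>c. ?g (c - x) * tchar (-j) c" "{0..1}"]
  show "integrable lborel (kernel j x)"
    unfolding eq by (rule integrable_mult_right) (use tr(1) to_lborel(1) in \<open>simp add: set_integrable_def\<close>)
  have "integral\<^sup>L lborel (kernel j x)
      = (indicator {0..1} x *\<^sub>R complex_of_real (f x)) * (LINT c:{0..1}|lborel. ?g (c - x) * tchar (-j) c)"
    unfolding eq set_lebesgue_integral_def by (rule integral_mult_right_zero)
  also have "(LINT c:{0..1}|lborel. ?g (c - x) * tchar (-j) c) = cfourier_coeff (\<lambda>c. ?g (c - x)) j"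
    unfolding cfourier_coeff_def by (rule to_lborel(2)[symmetric]) measurable
  also have "\<dots> = fourier_coeff g j * tchar (-j) x"
    using tr(2) by (simp add: fourier_coeff_eq_cfourier_coeff)
  finally show "integral\<^sup>L lborel (kernel j x) = indicator {0..1} x *\<^sub>R (complex_of_real (f x) * tchar (-j) x) * fourier_coeff g j"
    by (simp add: mult_ac)
qed

private lemma kernel_integrable: "integrable (lborel \<Otimes>\<^sub>M lborel) (\<lambda>(x, c). kernel j x c)"
proof (rule lborel_pair.Fubini_integrable)
  show "(\<lambda>(x, c). kernel j x c) \<in> borel_measurable (lborel \<Otimes>\<^sub>M lborel)"
    unfolding kernel_def by measurable
  show "AE x in lborel. integrable lborel (\<lambda>c. case (x, c) of (x, c) \<Rightarrow> kernel j x c)"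
    using kernel_inner(1) by simp
  have abs_g [measurable]: "(\<lambda>c. \<bar>g c\<bar>) \<in> borel_measurable borel" by measurable
  have "periodic1 (\<lambda>c. \<bar>g c\<bar>)" using per by (simp add: periodic1_def)
  note tr = periodic1_integral_translate[OF abs_g this integrable_abs[OF g_int]]
  have "integral\<^sup>L lborel (\<lambda>c. norm (kernel j x c))
      = indicator {0..1} x * \<bar>f x\<bar> * (LINT c|lebesgue_on {0..1}. \<bar>g c\<bar>)" for x
  proof -
    have "(\<lambda>c. norm (kernel j x c)) = (\<lambda>c. (indicator {0..1} x * \<bar>f x\<bar>) * (indicator {0..1} c *\<^sub>R \<bar>g (c - x)\<bar>))"
      by (auto simp: fun_eq_iff kernel_def indicator_def norm_mult abs_mult)
    then show ?thesis
      using integral_lebesgue_on_eq_set_integral(2)[of "\<lambda>c. \<bar>g (c - x)\<bar>" "{0..1}"] tr(2)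
      by (simp add: set_lebesgue_integral_def)
  qed
  moreover have "integrable lborel (\<lambda>x. indicator {0..1} x * \<bar>f x\<bar> * (LINT c|lebesgue_on {0..1}. \<bar>g c\<bar>))"
    using integral_lebesgue_on_eq_set_integral(1)[of "\<lambda>x. \<bar>f x\<bar>" "{0..1}"] integrable_abs[OF f_int]
    by (simp add: set_integrable_def)
  ultimately show "integrable lborel (\<lambda>x. \<integral>c. norm (case (x, c) of (x, c) \<Rightarrow> kernel j x c) \<partial>lborel)"
    by simp
qed

lemma fourier_coeff_tconv: "fourier_coeff (tconv f g) j = fourier_coeff f j * fourier_coeff g j"
proof -
  have outer: "indicator {0..1} c *\<^sub>R (complex_of_real (tconv f g c) * tchar (-j) c)
      = integral\<^sup>L lborel (\<lambda>x. kernel j x c)" for c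
  proof -
    have "complex_of_real (tconv f g c) * tchar (-j) c
        = (LINT x|lebesgue_on {0..1}. complex_of_real (f x * g (c - x)) * tchar (-j) c)"
      unfolding tconv_def integral_mult_left_zero integral_complex_of_real ..
    also have "\<dots> = (LINT x:{0..1}|lborel. complex_of_real (f x * g (c - x)) * tchar (-j) c)"
      by (rule integral_lebesgue_on_eq_set_integral(2)) measurable
    finally have "indicator {0..1} c *\<^sub>R (complex_of_real (tconv f g c) * tchar (-j) c)
        = integral\<^sup>L lborel (\<lambda>x. indicator {0..1} c *\<^sub>R
            (indicator {0..1} x *\<^sub>R (complex_of_real (f x * g (c - x)) * tchar (-j) c)))"
      unfolding set_lebesgue_integral_def integral_scaleR_right by (simp only:)
    also have "\<dots> = integral\<^sup>L lborel (\<lambda>x. kernel j x c)"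
      by (simp add: kernel_def mult_ac)
    finally show ?thesis .
  qed
  have "fourier_coeff (tconv f g) j = (LINT c:{0..1}|lborel. complex_of_real (tconv f g c) * tchar (-j) c)"
    unfolding fourier_coeff_eq_cfourier_coeff cfourier_coeff_def
    by (rule integral_lebesgue_on_eq_set_integral(2)) measurable
  also have "\<dots> = integral\<^sup>L lborel (\<lambda>c. integral\<^sup>L lborel (\<lambda>x. kernel j x c))"
    by (simp add: set_lebesgue_integral_def outer)
  also have "\<dots> = integral\<^sup>L lborel (\<lambda>x. integral\<^sup>L lborel (kernel j x))"
    using lborel_pair.Fubini_integral[OF kernel_integrable] by simp
  also have "\<dots> = (LINT x:{0..1}|lborel. complex_of_real (f x) * tchar (-j) x) * fourier_coeff g j"
    by (simp only: kernel_inner(2) integral_mult_left_zero set_lebesgue_integral_def)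
  also have "(LINT x:{0..1}|lborel. complex_of_real (f x) * tchar (-j) x) = fourier_coeff f j"
    unfolding fourier_coeff_eq_cfourier_coeff cfourier_coeff_def
    by (rule integral_lebesgue_on_eq_set_integral(2)[symmetric]) measurable
  finally show ?thesis .
qed

end

section \<open>Trigonometric polynomials\<close>

lemma cfourier_coeff_trig_sum:
  assumes "finite F"
  shows "cfourier_coeff (\<lambda>x. \<Sum>j\<in>F. c j * tchar j x) k = (if k \<in> F then c k else 0)"
proof -
  have "integrable (lebesgue_on {0..1}) (\<lambda>x. c j * tchar (j - k) x)" for j
    by (intro integrable_mult_right continuous_imp_integrable_real continuous_on_tchar)
  then have "cfourier_coeff (\<lambda>x. \<Sum>j\<in>F. c j * tchar j x) k = (\<Sum>j\<in>F. c j * (LINT x|lebesgue_on {0..1}. tchar (j - k) x))"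
    by (simp add: cfourier_coeff_def sum_distrib_right mult.assoc tchar_mult)
  also have "\<dots> = (\<Sum>j\<in>F. if j = k then c k else 0)"
    by (intro sum.cong) (auto simp: integral_tchar)
  also have "\<dots> = (if k \<in> F then c k else 0)"
    using assms by simp
  finally show ?thesis .
qed

lemma integral_mult_trig_sum:
  fixes h :: "real \<Rightarrow> complex"
  assumes "integrable (lebesgue_on {0..1}) h"
  shows "(LINT x|lebesgue_on {0..1}. h x * (\<Sum>j\<in>F. c j * tchar j x)) = (\<Sum>j\<in>F. c j * cfourier_coeff h (-j))"
proof -
  have "(\<lambda>x. h x * (\<Sum>j\<in>F. c j * tchar j x)) = (\<lambda>x. \<Sum>j\<in>F. c j * (h x * tchar j x))"
    by (simp add: fun_eq_iff sum_distrib_left mult_ac)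
  then show ?thesis
    using integrable_mult_tchar[OF assms] by (simp add: cfourier_coeff_def)
qed

lemma integral_mult_cnj_trig_sum:
  fixes h :: "real \<Rightarrow> complex"
  assumes "integrable (lebesgue_on {0..1}) h"
  shows "(LINT x|lebesgue_on {0..1}. h x * cnj (\<Sum>j\<in>F. c j * tchar j x)) = (\<Sum>j\<in>F. cnj (c j) * cfourier_coeff h j)"
proof -
  have "(\<lambda>x. h x * cnj (\<Sum>j\<in>F. c j * tchar j x)) = (\<lambda>x. \<Sum>j\<in>F. cnj (c j) * (h x * tchar (-j) x))"
    by (simp add: fun_eq_iff sum_distrib_left cnj_tchar mult_ac)
  then show ?thesis
    using integrable_mult_tchar[OF assms] by (simp add: cfourier_coeff_def)
qed

lemma norm_diff_power2: "(norm (a - b))\<^sup>2 = (norm a)\<^sup>2 - 2 * Re (a * cnj b) + (norm (b::complex))\<^sup>2"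
  unfolding cmod_power2 by (simp add: power2_eq_square algebra_simps)

lemma integral_norm_trig_sum_sq:
  assumes "finite F"
  shows "(LINT x|lebesgue_on {0..1}. (norm (\<Sum>j\<in>F. c j * tchar j x))\<^sup>2) = (\<Sum>j\<in>F. (norm (c j))\<^sup>2)"
proof -
  let ?q = "\<lambda>x. \<Sum>j\<in>F. c j * tchar j x"
  have "integrable (lebesgue_on {0..1}) ?q"
    by (intro integrable_sum integrable_mult_right continuous_imp_integrable_real continuous_intros)
  then have "(LINT x|lebesgue_on {0..1}. ?q x * cnj (?q x)) = (\<Sum>j\<in>F. cnj (c j) * cfourier_coeff ?q j)"
    by (rule integral_mult_cnj_trig_sum)
  also have "\<dots> = (\<Sum>j\<in>F. c j * cnj (c j))"
    using assms by (simp add: cfourier_coeff_trig_sum mult.commute)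
  finally have "complex_of_real (LINT x|lebesgue_on {0..1}. (norm (?q x))\<^sup>2)
      = complex_of_real (\<Sum>j\<in>F. (norm (c j))\<^sup>2)"
    by (simp only: of_real_sum complex_norm_square integral_complex_of_real[symmetric])
  then show ?thesis by (simp only: of_real_eq_iff)
qed

lemma borel_measurable_cnj [measurable]:
  fixes h :: "'a \<Rightarrow> complex"
  shows "h \<in> borel_measurable M \<Longrightarrow> (\<lambda>x. cnj (h x)) \<in> borel_measurable M"
  by (rule borel_measurable_continuous_on[where f = cnj]) (auto intro: continuous_intros)

lemma integral_norm_diff_trig_sum_sq:
  fixes h :: "real \<Rightarrow> complex"
  assumes [measurable]: "h \<in> borel_measurable (lebesgue_on {0..1})"
    and bounded: "\<And>x. norm (h x) \<le> B" and "finite F"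
  shows "(LINT x|lebesgue_on {0..1}. (norm (h x - (\<Sum>j\<in>F. c j * tchar j x)))\<^sup>2)
       = (LINT x|lebesgue_on {0..1}. (norm (h x))\<^sup>2) - (\<Sum>j\<in>F. (norm (cfourier_coeff h j))\<^sup>2)
         + (\<Sum>j\<in>F. (norm (c j - cfourier_coeff h j))\<^sup>2)"
proof -
  let ?M = "lebesgue_on {0..1::real}"
  let ?h = "cfourier_coeff h"
  define q where "q x = (\<Sum>j\<in>F. c j * tchar j x)" for x
  define C where "C = (\<Sum>j\<in>F. norm (c j))"
  have [measurable]: "q \<in> borel_measurable ?M" unfolding q_def by measurable
  have q_bounded: "norm (q x) \<le> C" for x
    unfolding q_def C_def by (rule order_trans[OF norm_sum]) (simp add: norm_mult)
  have "0 \<le> B" using bounded[of 0] norm_ge_zero order_trans by blast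
  have h_int: "integrable ?M h" by (rule integrable_lebesgue_on_01_bounded[OF _ bounded]) measurable
  have "integrable ?M (\<lambda>x. (norm (h x))\<^sup>2)"
    using bounded by (intro integrable_lebesgue_on_01_bounded[of _ "B\<^sup>2"]) (auto intro: power_mono)
  moreover define r where "r x = Re (h x * cnj (q x))" for x
  have hq_int: "integrable ?M (\<lambda>x. h x * cnj (q x))"
  proof (rule integrable_lebesgue_on_01_bounded[of _ "B * C"])
    show "(\<lambda>x. h x * cnj (q x)) \<in> borel_measurable ?M" by measurable
    show "norm (h x * cnj (q x)) \<le> B * C" for x
      using bounded q_bounded \<open>0 \<le> B\<close> by (auto simp: norm_mult intro: mult_mono)
  qed
  then have "integrable ?M r" unfolding r_def by (rule integrable_Re)
  moreover have "integrable ?M (\<lambda>x. (norm (q x))\<^sup>2)"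
    using q_bounded by (intro integrable_lebesgue_on_01_bounded[of _ "C\<^sup>2"]) (auto intro: power_mono)
  moreover have "(\<lambda>x. (norm (h x - q x))\<^sup>2) = (\<lambda>x. (norm (h x))\<^sup>2 - 2 * r x + (norm (q x))\<^sup>2)"
    by (simp only: norm_diff_power2 r_def)
  ultimately have "(LINT x|?M. (norm (h x - q x))\<^sup>2)
      = (LINT x|?M. (norm (h x))\<^sup>2) - 2 * (LINT x|?M. r x) + (LINT x|?M. (norm (q x))\<^sup>2)"
    by simp
  also have "(LINT x|?M. r x) = Re (LINT x|?M. h x * cnj (q x))"
    unfolding r_def by (rule integral_Re[OF hq_int])
  also have "(LINT x|?M. h x * cnj (q x)) = (\<Sum>j\<in>F. cnj (c j) * ?h j)"
    unfolding q_def by (rule integral_mult_cnj_trig_sum[OF h_int])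
  also have "(LINT x|?M. (norm (q x))\<^sup>2) = (\<Sum>j\<in>F. (norm (c j))\<^sup>2)"
    unfolding q_def by (rule integral_norm_trig_sum_sq[OF \<open>finite F\<close>])
  also have "(LINT x|?M. (norm (h x))\<^sup>2) - 2 * Re (\<Sum>j\<in>F. cnj (c j) * ?h j) + (\<Sum>j\<in>F. (norm (c j))\<^sup>2)
      = (LINT x|?M. (norm (h x))\<^sup>2) - (\<Sum>j\<in>F. (norm (?h j))\<^sup>2) + (\<Sum>j\<in>F. (norm (c j - ?h j))\<^sup>2)"
    by (simp add: norm_diff_power2 sum.distrib sum_subtractf sum_distrib_left Re_sum)
  finally show ?thesis unfolding q_def .
qed

lemma bessel_inequality:
  fixes h :: "real \<Rightarrow> complex"
  assumes "h \<in> borel_measurable (lebesgue_on {0..1})" "\<And>x. norm (h x) \<le> B" "finite F"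
  shows "(\<Sum>j\<in>F. (norm (cfourier_coeff h j))\<^sup>2) \<le> (LINT x|lebesgue_on {0..1}. (norm (h x))\<^sup>2)"
proof -
  have "0 \<le> (LINT x|lebesgue_on {0..1}. (norm (h x - (\<Sum>j\<in>F. cfourier_coeff h j * tchar j x)))\<^sup>2)"
    by (intro integral_nonneg_AE) simp
  then show ?thesis using integral_norm_diff_trig_sum_sq[OF assms, of "cfourier_coeff h"] by simp
qed

definition trig_poly :: "(real \<Rightarrow> complex) \<Rightarrow> bool" where
  "trig_poly q \<longleftrightarrow> (\<exists>F c. finite F \<and> (\<forall>x. q x = (\<Sum>j\<in>F. c j * tchar j x)))"

lemma trig_poly_const: "trig_poly (\<lambda>x. a)"
  unfolding trig_poly_def by (intro exI[of _ "{0}"] exI[of _ "\<lambda>_. a"]) simp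

lemma trig_poly_add:
  assumes "trig_poly p" "trig_poly q" shows "trig_poly (\<lambda>x. p x + q x)"
proof -
  obtain F c where F: "finite F" "\<And>x. p x = (\<Sum>j\<in>F. c j * tchar j x)"
    using assms(1) unfolding trig_poly_def by blast
  obtain G d where G: "finite G" "\<And>x. q x = (\<Sum>j\<in>G. d j * tchar j x)"
    using assms(2) unfolding trig_poly_def by blast
  define e where "e j = (if j \<in> F then c j else 0) + (if j \<in> G then d j else 0)" for j
  have extend: "(\<Sum>j\<in>F \<union> G. (if j \<in> H then b j else 0) * tchar j x) = (\<Sum>j\<in>H. b j * tchar j x)"
    if "H \<subseteq> F \<union> G" for H b x
    by (rule sum.mono_neutral_cong_right) (use F(1) G(1) that in auto)
  have "p x + q x = (\<Sum>j\<in>F \<union> G. e j * tchar j x)" for x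
    unfolding e_def distrib_right sum.distrib F(2) G(2) by (simp add: extend)
  then show ?thesis unfolding trig_poly_def using F(1) G(1) by blast
qed

lemma trig_poly_mult:
  assumes "trig_poly p" "trig_poly q" shows "trig_poly (\<lambda>x. p x * q x)"
proof -
  obtain F c where F: "finite F" "\<And>x. p x = (\<Sum>j\<in>F. c j * tchar j x)"
    using assms(1) unfolding trig_poly_def by blast
  obtain G d where G: "finite G" "\<And>x. q x = (\<Sum>j\<in>G. d j * tchar j x)"
    using assms(2) unfolding trig_poly_def by blast
  define s where "s = (\<lambda>(j, k). j + k :: int)"
  define e where "e m = (\<Sum>(j, k)\<in>{jk \<in> F \<times> G. s jk = m}. c j * d k)" for m
  have fin: "finite (F \<times> G)" "finite (s ` (F \<times> G))" using F(1) G(1) by auto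
  have "p x * q x = (\<Sum>m\<in>s ` (F \<times> G). e m * tchar m x)" for x
  proof -
    have "p x * q x = (\<Sum>(j, k)\<in>F \<times> G. c j * d k * tchar (s (j, k)) x)"
      unfolding F(2) G(2) sum_product sum.cartesian_product
      by (intro sum.cong refl) (auto simp: s_def tchar_mult[symmetric] mult_ac)
    also have "\<dots> = (\<Sum>m\<in>s ` (F \<times> G). \<Sum>(j, k)\<in>{jk \<in> F \<times> G. s jk = m}. c j * d k * tchar (s (j, k)) x)"
      by (rule sum.group[symmetric, OF fin]) auto
    also have "\<dots> = (\<Sum>m\<in>s ` (F \<times> G). e m * tchar m x)"
      unfolding e_def sum_distrib_right by (intro sum.cong refl) auto
    finally show ?thesis .
  qed
  then show ?thesis unfolding trig_poly_def using fin by blast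
qed

lemma trig_poly_cos: "trig_poly (\<lambda>x. complex_of_real (cos (2 * pi * x)))"
proof -
  have "complex_of_real (cos (2 * pi * x)) = (\<Sum>j\<in>{-1, 1}. 1/2 * tchar j x)" for x
    by (simp add: tchar_eq_cis complex_eq_iff)
  then show ?thesis unfolding trig_poly_def by (intro exI[of _ "{-1, 1}"] exI[of _ "\<lambda>_. 1/2"]) simp
qed

lemma trig_poly_sin: "trig_poly (\<lambda>x. complex_of_real (sin (2 * pi * x)))"
proof -
  define c :: "int \<Rightarrow> complex" where "c j = (if j = 1 then - \<i> / 2 else \<i> / 2)" for j
  have "complex_of_real (sin (2 * pi * x)) = (\<Sum>j\<in>{-1, 1}. c j * tchar j x)" for x
    by (simp add: c_def tchar_eq_cis complex_eq_iff)
  then show ?thesis unfolding trig_poly_def by (intro exI[of _ "{-1, 1}"] exI[of _ c]) simp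
qed

lemma trig_poly_real_polynomial_cis:
  assumes "real_polynomial_function p"
  shows "trig_poly (\<lambda>x. complex_of_real (p (cis (2 * pi * x))))"
  using assms
proof induction
  case (linear f)
  interpret bounded_linear f by fact
  have "f (cis t) = cos t * f 1 + sin t * f \<i>" for t
  proof -
    have "cis t = cos t *\<^sub>R 1 + sin t *\<^sub>R \<i>" by (simp add: complex_eq_iff)
    then show ?thesis by (simp add: add scaleR)
  qed
  then have "(\<lambda>x. complex_of_real (f (cis (2 * pi * x))))
      = (\<lambda>x. complex_of_real (cos (2 * pi * x)) * complex_of_real (f 1)
           + complex_of_real (sin (2 * pi * x)) * complex_of_real (f \<i>))"
    by (simp add: fun_eq_iff)
  then show ?case by (simp only:) (intro trig_poly_add trig_poly_mult trig_poly_cos trig_poly_sin trig_poly_const)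
qed (auto intro: trig_poly_const trig_poly_add trig_poly_mult)

lemma Arg_cis_eq_mod_2pi: "\<exists>n::int. Arg (cis t) = t + of_int n * 2 * pi"
proof -
  have "cis (Arg (cis t)) = cis t" using cis_Arg[of "cis t"] by simp
  then have "cis (Arg (cis t) - t) = 1" by (simp add: cis_divide[symmetric])
  then have "cos (Arg (cis t) - t) = 1" by (simp add: complex_eq_iff)
  then obtain n :: int where "Arg (cis t) - t = of_int n * 2 * pi" using cos_one_2pi_int by blast
  then show ?thesis by (intro exI[of _ n]) simp
qed

lemma cis_2pi_image_unit_interval: "(\<lambda>x. cis (2 * pi * x)) ` {0..1} = sphere 0 1"
proof
  show "(\<lambda>x. cis (2 * pi * x)) ` {0..1} \<subseteq> sphere 0 1" by auto
  show "sphere 0 1 \<subseteq> (\<lambda>x. cis (2 * pi * x)) ` {0..1}"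
  proof
    fix z :: complex assume "z \<in> sphere 0 1"
    then obtain t where "0 \<le> t" "t < 2 * pi" "z = Complex (cos t) (sin t)"
      using complex_unimodular_polar[of z] by auto
    then have "t / (2 * pi) \<in> {0..1}" "z = cis (2 * pi * (t / (2 * pi)))"
      by (auto simp: cis.ctr)
    then show "z \<in> (\<lambda>x. cis (2 * pi * x)) ` {0..1}" by blast
  qed
qed

lemma quotient_map_cis_2pi:
  "quotient_map (top_of_set {0..1}) (top_of_set (sphere 0 1)) (\<lambda>x. cis (2 * pi * x))"
proof (rule continuous_imp_quotient_map)
  have "continuous_on {0..1} (\<lambda>x. cis (2 * pi * x))" by (intro continuous_intros)
  then show "continuous_map (top_of_set {0..1}) (top_of_set (sphere 0 1)) (\<lambda>x. cis (2 * pi * x))"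
    by (simp add: image_subset_iff Pi_iff)
qed (auto simp: compact_space_subtopology Hausdorff_space_subtopology cis_2pi_image_unit_interval)

lemma periodic1_factors_through_circle:
  fixes K :: "real \<Rightarrow> real"
  assumes cont: "continuous_on UNIV K" and per: "periodic1 K"
  obtains \<phi> where "continuous_on (sphere 0 1) \<phi>" "\<And>x. K x = \<phi> (cis (2 * pi * x))"
proof -
  define \<phi> where "\<phi> z = K (Arg z / (2 * pi))" for z
  have \<phi>_cis: "\<phi> (cis (2 * pi * x)) = K x" for x
  proof -
    obtain n :: int where n: "Arg (cis (2 * pi * x)) = 2 * pi * x + of_int n * 2 * pi"
      using Arg_cis_eq_mod_2pi by blast
    have "Arg (cis (2 * pi * x)) / (2 * pi) = x + of_int n" unfolding n by (simp add: field_simps)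
    then show ?thesis unfolding \<phi>_def using periodic1_add_of_int[OF per] by simp
  qed
  have "continuous_map (top_of_set {0..1}) euclidean K"
    using continuous_on_subset[OF cont] by simp
  then have "continuous_map (top_of_set {0..1}) euclidean (\<phi> \<circ> (\<lambda>x. cis (2 * pi * x)))"
    by (rule continuous_map_eq) (simp add: \<phi>_cis)
  then have "continuous_map (top_of_set (sphere 0 1)) euclidean \<phi>"
    by (rule continuous_compose_quotient_map[OF quotient_map_cis_2pi])
  then show ?thesis using that \<phi>_cis by simp
qed

lemma trig_poly_uniform_approx:
  fixes K :: "real \<Rightarrow> real"
  assumes "continuous_on UNIV K" and "periodic1 K" and "0 < e"
  obtains q where "trig_poly q" "\<And>x. norm (complex_of_real (K x) - q x) < e"
proof -
  obtain \<phi> where \<phi>: "continuous_on (sphere 0 1) \<phi>" "\<And>x. K x = \<phi> (cis (2 * pi * x))"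
    using periodic1_factors_through_circle[OF assms(1,2)] by blast
  obtain p where p: "polynomial_function p" "\<forall>z\<in>sphere 0 1. norm (\<phi> z - p z) < e"
    using Stone_Weierstrass_polynomial_function[OF compact_sphere \<phi>(1) assms(3)] by blast
  have "trig_poly (\<lambda>x. complex_of_real (p (cis (2 * pi * x))))"
    using p(1) by (intro trig_poly_real_polynomial_cis) (simp add: real_polynomial_function_eq)
  moreover have "norm (complex_of_real (K x) - complex_of_real (p (cis (2 * pi * x)))) < e" for x
    using p(2) by (simp add: \<phi>(2) flip: of_real_diff)
  ultimately show ?thesis using that by blast
qed

lemma fourier_partial_sum_L2_approx:
  fixes K :: "real \<Rightarrow> real"
  assumes cont: "continuous_on UNIV K" and per: "periodic1 K" and "0 < d"
  obtains F where "finite F"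
    "(LINT x|lebesgue_on {0..1}. (norm (K x - (\<Sum>j\<in>F. fourier_coeff K j * tchar j x)))\<^sup>2) \<le> d\<^sup>2"
proof -
  let ?M = "lebesgue_on {0..1::real}"
  let ?K = "\<lambda>x. complex_of_real (K x)"
  obtain q where "trig_poly q" and q: "\<And>x. norm (?K x - q x) < d"
    using trig_poly_uniform_approx[OF cont per \<open>0 < d\<close>] by blast
  then obtain F c where F: "finite F" and q_eq: "\<And>x. q x = (\<Sum>j\<in>F. c j * tchar j x)"
    unfolding trig_poly_def by blast
  obtain B where B: "\<And>x. \<bar>K x\<bar> \<le> B" using continuous_periodic1_bounded[OF cont per] by blast
  have [measurable]: "K \<in> borel_measurable borel" using cont by (rule borel_measurable_continuous_onI)
  have K_meas: "?K \<in> borel_measurable ?M" by (intro borel_measurable_lebesgue_onI) measurable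
  note pyth = integral_norm_diff_trig_sum_sq[OF K_meas _ F, of B]
  have "(LINT x|?M. (norm (?K x - (\<Sum>j\<in>F. fourier_coeff K j * tchar j x)))\<^sup>2)
      \<le> (LINT x|?M. (norm (?K x - q x))\<^sup>2)"
    using pyth[of "fourier_coeff K"] pyth[of c] B
    by (simp add: q_eq fourier_coeff_eq_cfourier_coeff sum_nonneg)
  also have "\<dots> \<le> (LINT x|?M. d\<^sup>2)"
  proof (rule integral_mono)
    show bound: "(norm (?K x - q x))\<^sup>2 \<le> d\<^sup>2" for x
      using q[of x] by (intro power_mono) auto
    have "q = (\<lambda>x. \<Sum>j\<in>F. c j * tchar j x)" using q_eq by blast
    then have [measurable]: "q \<in> borel_measurable borel" by simp
    show "integrable ?M (\<lambda>x. (norm (?K x - q x))\<^sup>2)"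
      by (rule integrable_lebesgue_on_01_bounded[of _ "d\<^sup>2"])
         (use bound in \<open>auto intro!: borel_measurable_lebesgue_onI\<close>)
  qed simp
  finally show ?thesis using that F by (simp add: measure_restrict_space)
qed

section \<open>Approximating \<integral>f K by Fourier sums\<close>

lemma abs_mult_le_weighted_squares:
  assumes "0 < d" shows "\<bar>a\<bar> * \<bar>b\<bar> \<le> (d * a\<^sup>2 + b\<^sup>2 / d) / (2::real)"
proof -
  have "0 \<le> (d * \<bar>a\<bar> - \<bar>b\<bar>)\<^sup>2" by simp
  then have "2 * d * (\<bar>a\<bar> * \<bar>b\<bar>) \<le> d\<^sup>2 * a\<^sup>2 + b\<^sup>2" by (simp add: power2_eq_square algebra_simps)
  then show ?thesis using assms by (simp add: power2_eq_square field_simps)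
qed

lemma norm_integral_mult_le_weighted_L2:
  fixes f :: "real \<Rightarrow> real" and R :: "real \<Rightarrow> complex"
  assumes [measurable]: "f \<in> borel_measurable (lebesgue_on {0..1})" "R \<in> borel_measurable (lebesgue_on {0..1})"
    and f_sq: "integrable (lebesgue_on {0..1}) (\<lambda>x. (f x)\<^sup>2)"
    and R_bound: "\<And>x. norm (R x) \<le> C" and "0 < d"
  shows "norm (LINT x|lebesgue_on {0..1}. complex_of_real (f x) * R x)
    \<le> (d * (LINT x|lebesgue_on {0..1}. (f x)\<^sup>2) + (LINT x|lebesgue_on {0..1}. (norm (R x))\<^sup>2) / d) / 2"
proof -
  let ?M = "lebesgue_on {0..1::real}"
  have "0 \<le> C" using R_bound[of 0] norm_ge_zero order_trans by blast
  have f_int: "integrable ?M f"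
    by (rule integrable_if_square_integrable[OF finite_measure_lebesgue_on _ f_sq]) auto
  have fR_int: "integrable ?M (\<lambda>x. complex_of_real (f x) * R x)"
  proof (rule Bochner_Integration.integrable_bound[where f = "\<lambda>x. C * f x"])
    show "AE x in ?M. norm (complex_of_real (f x) * R x) \<le> norm (C * f x)"
      using R_bound \<open>0 \<le> C\<close>
      by (intro AE_I2) (simp add: norm_mult abs_mult mult.commute[of C] mult_left_mono)
  qed (use f_int in auto)
  have R2_int: "integrable ?M (\<lambda>x. (norm (R x))\<^sup>2)"
    using R_bound by (intro integrable_lebesgue_on_01_bounded[of _ "C\<^sup>2"]) (auto intro: power_mono)
  have "norm (LINT x|?M. complex_of_real (f x) * R x) \<le> (LINT x|?M. norm (complex_of_real (f x) * R x))"
    by (rule integral_norm_bound)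
  also have "\<dots> \<le> (LINT x|?M. (d * (f x)\<^sup>2 + (norm (R x))\<^sup>2 / d) / 2)"
  proof (rule integral_mono)
    show "norm (complex_of_real (f x) * R x) \<le> (d * (f x)\<^sup>2 + (norm (R x))\<^sup>2 / d) / 2" for x
      using abs_mult_le_weighted_squares[OF \<open>0 < d\<close>, of "f x" "norm (R x)"] by (simp add: norm_mult)
  qed (use fR_int f_sq R2_int in simp_all)
  also have "\<dots> = (d * (LINT x|?M. (f x)\<^sup>2) + (LINT x|?M. (norm (R x))\<^sup>2) / d) / 2"
    using f_sq R2_int by simp
  finally show ?thesis .
qed

lemma integral_mult_eq_fourier_sum_plus_remainder:
  fixes f K :: "real \<Rightarrow> real"
  assumes f_int: "integrable (lebesgue_on {0..1}) f"
    and [measurable]: "K \<in> borel_measurable borel" and K_bound: "\<And>x. \<bar>K x\<bar> \<le> B"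
  shows "complex_of_real (LINT x|lebesgue_on {0..1}. f x * K x)
    = (\<Sum>j\<in>F. fourier_coeff K j * fourier_coeff f (-j))
      + (LINT x|lebesgue_on {0..1}. complex_of_real (f x) * (K x - (\<Sum>j\<in>F. fourier_coeff K j * tchar j x)))"
proof -
  let ?M = "lebesgue_on {0..1::real}"
  let ?P = "\<lambda>x. \<Sum>j\<in>F. fourier_coeff K j * tchar j x"
  have fK_int: "integrable ?M (\<lambda>x. f x * K x)"
    by (rule integrable_mult_bounded[OF f_int _ K_bound]) (intro borel_measurable_lebesgue_onI, measurable)
  have f_int': "integrable ?M (\<lambda>x. complex_of_real (f x))" using f_int by simp
  have fP_int: "integrable ?M (\<lambda>x. complex_of_real (f x) * ?P x)"
    unfolding sum_distrib_left using integrable_mult_tchar[OF f_int'] by (auto simp: mult.left_commute)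
  have "(LINT x|?M. complex_of_real (f x) * (K x - ?P x))
      = (LINT x|?M. complex_of_real (f x) * K x) - (LINT x|?M. complex_of_real (f x) * ?P x)"
    unfolding right_diff_distrib
    by (rule Bochner_Integration.integral_diff)
       (use complex_of_real_integrable_eq[THEN iffD2, OF fK_int, unfolded of_real_mult] fP_int in simp_all)
  also have "\<dots> = complex_of_real (LINT x|?M. f x * K x) - (\<Sum>j\<in>F. fourier_coeff K j * fourier_coeff f (-j))"
    unfolding integral_mult_trig_sum[OF f_int'] of_real_mult[symmetric] integral_complex_of_real
    by (simp add: fourier_coeff_eq_cfourier_coeff)
  finally show ?thesis by simp
qed

lemma integral_mult_fourier_sum_approx:
  fixes f K :: "real \<Rightarrow> real"
  assumes cont: "continuous_on UNIV K" and per: "periodic1 K"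
    and [measurable]: "f \<in> borel_measurable borel"
    and f_sq: "integrable (lebesgue_on {0..1}) (\<lambda>x. (f x)\<^sup>2)" and "0 < e"
  obtains F where "finite F"
    "norm (complex_of_real (LINT x|lebesgue_on {0..1}. f x * K x)
       - (\<Sum>j\<in>F. fourier_coeff K j * fourier_coeff f (-j))) \<le> e"
proof -
  let ?M = "lebesgue_on {0..1::real}"
  define N where "N = (LINT x|?M. (f x)\<^sup>2)"
  have "0 \<le> N" unfolding N_def by (intro integral_nonneg_AE) simp
  define d where "d = e / (N + 1)"
  have "0 < d" using \<open>0 < e\<close> \<open>0 \<le> N\<close> by (simp add: d_def)
  obtain F where F: "finite F"
    and L2: "(LINT x|?M. (norm (K x - (\<Sum>j\<in>F. fourier_coeff K j * tchar j x)))\<^sup>2) \<le> d\<^sup>2"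
    using fourier_partial_sum_L2_approx[OF cont per \<open>0 < d\<close>] by blast
  define R where "R x = complex_of_real (K x) - (\<Sum>j\<in>F. fourier_coeff K j * tchar j x)" for x
  obtain B where B: "\<And>x. \<bar>K x\<bar> \<le> B" using continuous_periodic1_bounded[OF cont per] by blast
  have [measurable]: "K \<in> borel_measurable borel" using cont by (rule borel_measurable_continuous_onI)
  have R_meas: "R \<in> borel_measurable ?M" unfolding R_def by (intro borel_measurable_lebesgue_onI) measurable
  have R_bound: "norm (R x) \<le> B + (\<Sum>j\<in>F. norm (fourier_coeff K j))" for x
    unfolding R_def using B[of x]
    by (intro norm_triangle_le_diff add_mono order_trans[OF norm_sum]) (auto simp: norm_mult)
  have f_int: "integrable ?M f"
    by (rule integrable_if_square_integrable[OF finite_measure_lebesgue_on _ f_sq])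
       (auto intro: borel_measurable_lebesgue_onI)
  have "norm (complex_of_real (LINT x|?M. f x * K x) - (\<Sum>j\<in>F. fourier_coeff K j * fourier_coeff f (-j)))
      = norm (LINT x|?M. complex_of_real (f x) * R x)"
    using integral_mult_eq_fourier_sum_plus_remainder[OF f_int _ B, where F = F] by (simp add: R_def)
  also have "\<dots> \<le> (d * N + (LINT x|?M. (norm (R x))\<^sup>2) / d) / 2"
    unfolding N_def using R_meas R_bound f_sq \<open>0 < d\<close>
    by (intro norm_integral_mult_le_weighted_L2) (auto intro: borel_measurable_lebesgue_onI)
  also have "\<dots> \<le> (d * N + d) / 2"
  proof -
    have "(LINT x|?M. (norm (R x))\<^sup>2) / d \<le> d"
      using L2 \<open>0 < d\<close> by (simp add: R_def divide_le_eq power2_eq_square)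
    then show ?thesis by (intro divide_right_mono add_left_mono) simp_all
  qed
  also have "\<dots> \<le> e"
  proof -
    have "d * (N + 1) = e" unfolding d_def using \<open>0 \<le> N\<close> by simp
    then show ?thesis using \<open>0 < e\<close> by (simp add: distrib_left)
  qed
  finally show ?thesis using that F by blast
qed

lemma is_pdfD:
  assumes "is_pdf f"
  shows "periodic1 f" "f \<in> borel_measurable borel" "AE x in lebesgue_on {0..1}. 0 \<le> f x"
    "integrable (lebesgue_on {0..1}) (\<lambda>x. (f x)\<^sup>2)" "(LINT x|lebesgue_on {0..1}. f x) = 1"
  using assms unfolding is_pdf_def by blast+

context
  fixes f :: "real \<Rightarrow> real"
  assumes pdf: "is_pdf f"
begin

private lemmas pdf_borel [measurable] = is_pdfD(2)[OF pdf]

lemma is_pdf_integrable: "integrable (lebesgue_on {0..1}) f"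
proof (rule integrable_if_square_integrable)
  show "finite_measure (lebesgue_on {0..1::real})" by (rule finite_measure_lebesgue_on) simp
  show "f \<in> borel_measurable (lebesgue_on {0..1})" by (intro borel_measurable_lebesgue_onI pdf_borel)
  show "integrable (lebesgue_on {0..1}) (\<lambda>x. (f x)\<^sup>2)" by (rule is_pdfD(4)[OF pdf])
qed

lemma is_pdf_tconv_nonneg: "0 \<le> tconv f f c"
  using tconv_nonneg[OF pdf_borel pdf_borel is_pdfD(1,3,3)[OF pdf]] .

lemma is_pdf_abs_tconv_le: "\<bar>tconv f f c\<bar> \<le> (LINT x|lebesgue_on {0..1}. (f x)\<^sup>2)"
  using abs_tconv_le[OF pdf_borel pdf_borel is_pdfD(1,4,4)[OF pdf]] by simp

lemma is_pdf_fourier_coeff_tconv: "fourier_coeff (tconv f f) j = (fourier_coeff f j)\<^sup>2"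
  using fourier_coeff_tconv[OF pdf_borel pdf_borel is_pdfD(1)[OF pdf] is_pdf_integrable is_pdf_integrable]
  by (simp add: power2_eq_square)

lemma is_pdf_integral_tconv: "(LINT x|lebesgue_on {0..1}. tconv f f x) = 1"
proof -
  have "fourier_coeff h 0 = complex_of_real (LINT x|lebesgue_on {0..1}. h x)" for h
    by (simp add: fourier_coeff_eq_cfourier_coeff cfourier_coeff_def)
  then show ?thesis using is_pdf_fourier_coeff_tconv[of 0] is_pdfD(5)[OF pdf] by simp
qed

lemma is_pdf_integrable_tconv:
  "integrable (lebesgue_on {0..1}) (tconv f f)"
  "integrable (lebesgue_on {0..1}) (\<lambda>x. (tconv f f x)\<^sup>2)"
proof -
  let ?N = "LINT x|lebesgue_on {0..1}. (f x)\<^sup>2"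
  have [measurable]: "tconv f f \<in> borel_measurable (lebesgue_on {0..1})"
    by (intro borel_measurable_lebesgue_onI) measurable
  show "integrable (lebesgue_on {0..1}) (tconv f f)"
    by (rule integrable_lebesgue_on_01_bounded[of _ ?N]) (auto intro: is_pdf_abs_tconv_le)
  show "integrable (lebesgue_on {0..1}) (\<lambda>x. (tconv f f x)\<^sup>2)"
    by (rule integrable_lebesgue_on_01_bounded[of _ "?N\<^sup>2"])
       (auto simp: abs_le_square_iff[symmetric] intro: order_trans[OF _ is_pdf_abs_tconv_le])
qed

end

lemma sum_Holder:
  fixes u v :: "'a \<Rightarrow> real"
  assumes "finite F" and pq: "p > 1" "q > 1" "1/p + 1/q = 1"
    and u: "\<And>j. 0 \<le> u j" and v: "\<And>j. 0 \<le> v j"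
    and A: "(\<Sum>j\<in>F. u j powr p) \<le> A" and B: "(\<Sum>j\<in>F. v j powr q) \<le> B"
  shows "(\<Sum>j\<in>F. u j * v j) \<le> A powr (1/p) * B powr (1/q)"
proof (cases "A \<le> 0 \<or> B \<le> 0")
  case True
  then have "(\<Sum>j\<in>F. u j powr p) = 0 \<or> (\<Sum>j\<in>F. v j powr q) = 0"
    using A B sum_nonneg[of F "\<lambda>j. u j powr p"] sum_nonneg[of F "\<lambda>j. v j powr q"] by auto
  then have "\<forall>j\<in>F. u j = 0 \<or> v j = 0"
    using \<open>finite F\<close> by (auto simp: sum_nonneg_eq_0_iff)
  then have "(\<Sum>j\<in>F. u j * v j) = 0" by (intro sum.neutral) auto
  then show ?thesis by simp
next
  case False
  then have "0 < A" "0 < B" by auto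
  define a where "a = A powr (1/p)"
  define b where "b = B powr (1/q)"
  have "0 < a" "0 < b" using \<open>0 < A\<close> \<open>0 < B\<close> by (auto simp: a_def b_def)
  have "a powr p = A" "b powr q = B"
    using \<open>0 < A\<close> \<open>0 < B\<close> pq by (simp_all add: a_def b_def powr_powr)
  have Young: "u j * v j \<le> a * b * (u j powr p / A / p + v j powr q / B / q)" for j
  proof -
    have "(u j / a) * (v j / b) \<le> (u j / a) powr p / p + (v j / b) powr q / q"
      using pq u v \<open>0 < a\<close> \<open>0 < b\<close> by (intro Youngs_inequality) auto
    also have "\<dots> = u j powr p / A / p + v j powr q / B / q"
      using u v \<open>0 < a\<close> \<open>0 < b\<close> by (simp add: powr_divide \<open>a powr p = A\<close> \<open>b powr q = B\<close>)
    finally show ?thesis using \<open>0 < a\<close> \<open>0 < b\<close> by (simp add: field_simps)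
  qed
  have "(\<Sum>j\<in>F. u j * v j) \<le> (\<Sum>j\<in>F. a * b * (u j powr p / A / p + v j powr q / B / q))"
    by (rule sum_mono) (rule Young)
  also have "\<dots> = a * b * ((\<Sum>j\<in>F. u j powr p) / A / p + (\<Sum>j\<in>F. v j powr q) / B / q)"
    by (simp only: sum_distrib_left[symmetric] sum.distrib sum_divide_distrib[symmetric])
  also have "\<dots> \<le> a * b * (A / A / p + B / B / q)"
    using \<open>0 < a\<close> \<open>0 < b\<close> \<open>0 < A\<close> \<open>0 < B\<close> pq A B
    by (intro mult_left_mono add_mono divide_right_mono) auto
  also have "\<dots> = a * b" using \<open>0 < A\<close> \<open>0 < B\<close> pq by simp
  finally show ?thesis by (simp add: a_def b_def)
qed

lemma sum_fourier_coeff_le_Holder: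
  assumes pdf: "is_pdf f" and summable: "lp_summable (4/3) (fourier_coeff K)" and "finite F"
  shows "(\<Sum>j\<in>F. norm (fourier_coeff f (-j)) * norm (fourier_coeff K j))
    \<le> (LINT x|lebesgue_on {0..1}. (tconv f f x)\<^sup>2) powr (1/4)
       * (\<Sum>\<^sub>\<infinity>j. norm (fourier_coeff K j) powr (4/3)) powr (3/4)"
proof -
  let ?g = "\<lambda>x. complex_of_real (tconv f f x)"
  have [measurable]: "f \<in> borel_measurable borel" by (rule is_pdfD(2)[OF pdf])
  have g_meas: "?g \<in> borel_measurable (lebesgue_on {0..1})"
    by (intro borel_measurable_lebesgue_onI) measurable
  have "norm (fourier_coeff f (-j)) powr 4 = (norm (cfourier_coeff ?g (-j)))\<^sup>2" for j
  proof -
    have "cfourier_coeff ?g (-j) = (fourier_coeff f (-j))\<^sup>2"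
      using is_pdf_fourier_coeff_tconv[OF pdf, of "-j"] by (simp add: fourier_coeff_eq_cfourier_coeff)
    then show ?thesis by (simp add: norm_power powr_numeral flip: power_mult)
  qed
  then have "(\<Sum>j\<in>F. norm (fourier_coeff f (-j)) powr 4) = (\<Sum>j\<in>F. (norm (cfourier_coeff ?g (-j)))\<^sup>2)"
    by simp
  also have "\<dots> = (\<Sum>k\<in>uminus ` F. (norm (cfourier_coeff ?g k))\<^sup>2)"
    by (simp add: sum.reindex inj_on_def)
  also have "\<dots> \<le> (LINT x|lebesgue_on {0..1}. (norm (?g x))\<^sup>2)"
    using \<open>finite F\<close> is_pdf_abs_tconv_le[OF pdf] by (intro bessel_inequality[OF g_meas]) auto
  finally have f4: "(\<Sum>j\<in>F. norm (fourier_coeff f (-j)) powr 4) \<le> (LINT x|lebesgue_on {0..1}. (tconv f f x)\<^sup>2)"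
    by simp
  have K43: "(\<Sum>j\<in>F. norm (fourier_coeff K j) powr (4/3)) \<le> (\<Sum>\<^sub>\<infinity>j. norm (fourier_coeff K j) powr (4/3))"
    using summable \<open>finite F\<close> by (intro finite_sum_le_infsum) (auto simp: lp_summable_def)
  have "(\<Sum>j\<in>F. norm (fourier_coeff f (-j)) * norm (fourier_coeff K j))
    \<le> (LINT x|lebesgue_on {0..1}. (tconv f f x)\<^sup>2) powr (1/4)
       * (\<Sum>\<^sub>\<infinity>j. norm (fourier_coeff K j) powr (4/3)) powr (1/(4/3))"
    by (rule sum_Holder[OF \<open>finite F\<close> _ _ _ _ _ f4 K43]) auto
  then show ?thesis by simp
qed

lemma integral_pdf_mult_ge_1:
  fixes K f :: "real \<Rightarrow> real"
  assumes cont: "continuous_on UNIV K" and per: "periodic1 K"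
    and K_ge_1: "\<And>x. x \<in> {-1/4..1/4} \<Longrightarrow> K x \<ge> 1"
    and pdf: "is_pdf f" and supp: "supported_quarter f"
  shows "1 \<le> (LINT x|lebesgue_on {0..1}. f x * K x)"
proof -
  let ?M = "lebesgue_on {0..1::real}"
  have [measurable]: "K \<in> borel_measurable borel" using cont by (rule borel_measurable_continuous_onI)
  obtain B where B: "\<And>x. \<bar>K x\<bar> \<le> B" using continuous_periodic1_bounded[OF cont per] by blast
  note f_int = is_pdf_integrable[OF pdf]
  have fK_int: "integrable ?M (\<lambda>x. f x * K x)"
    by (rule integrable_mult_bounded[OF f_int _ B]) (intro borel_measurable_lebesgue_onI, measurable)
  have K_ge_1': "1 \<le> K x" if "x \<in> {0..1}" "x \<notin> {1/4<..<3/4}" for x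
  proof (cases "x \<le> 1/4")
    case True then show ?thesis using that K_ge_1 by auto
  next
    case False
    have "K x = K ((x - 1) + of_int 1)" by simp
    also have "\<dots> = K (x - 1)" by (rule periodic1_add_of_int[OF per])
    finally show ?thesis using that False K_ge_1[of "x - 1"] by auto
  qed
  have "AE x in ?M. f x \<le> f x * K x"
  proof -
    have "AE x in ?M. 0 \<le> f x \<and> (x \<in> {1/4<..<3/4} \<longrightarrow> f x = 0)"
      using is_pdfD(3)[OF pdf] supp unfolding supported_quarter_def by eventually_elim auto
    then show ?thesis
    proof (rule lebesgue_on_mono)
      fix x :: real assume "0 \<le> f x \<and> (x \<in> {1/4<..<3/4} \<longrightarrow> f x = 0)" "x \<in> {0..1}"
      then show "f x \<le> f x * K x"
        using K_ge_1'[of x] mult_left_mono[of 1 "K x" "f x"] by (cases "x \<in> {1/4<..<3/4}") auto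
    qed
  qed
  then have "(LINT x|?M. f x) \<le> (LINT x|?M. f x * K x)"
    by (rule integral_mono_AE[OF f_int fK_int])
  then show ?thesis using is_pdfD(5)[OF pdf] by simp
qed

lemma one_le_L2_tconv_mult_lp_norm:
  fixes K f :: "real \<Rightarrow> real"
  assumes cont: "continuous_on UNIV K" and per: "periodic1 K"
    and K_ge_1: "\<And>x. x \<in> {-1/4..1/4} \<Longrightarrow> K x \<ge> 1"
    and pdf: "is_pdf f" and supp: "supported_quarter f"
    and summable: "lp_summable (4/3) (fourier_coeff K)"
  shows "1 \<le> (LINT x|lebesgue_on {0..1}. (tconv f f x)\<^sup>2) powr (1/4) * lp_norm (4/3) (fourier_coeff K)"
proof (rule field_le_epsilon)
  fix e :: real assume "0 < e"
  let ?I = "LINT x|lebesgue_on {0..1}. f x * K x"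
  let ?S = "\<lambda>F. \<Sum>j\<in>F. fourier_coeff K j * fourier_coeff f (-j)"
  obtain F where "finite F" and approx: "norm (complex_of_real ?I - ?S F) \<le> e"
    using integral_mult_fourier_sum_approx[OF cont per is_pdfD(2,4)[OF pdf] \<open>0 < e\<close>] by blast
  have "1 \<le> ?I" by (rule integral_pdf_mult_ge_1[OF cont per K_ge_1 pdf supp])
  also have "\<dots> = Re (complex_of_real ?I - ?S F) + Re (?S F)" by simp
  also have "\<dots> \<le> norm (complex_of_real ?I - ?S F) + norm (?S F)"
    by (intro add_mono complex_Re_le_cmod)
  also have "norm (?S F) \<le> (\<Sum>j\<in>F. norm (fourier_coeff f (-j)) * norm (fourier_coeff K j))"
    by (rule order_trans[OF norm_sum]) (simp add: norm_mult mult.commute)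
  also have "\<dots> \<le> (LINT x|lebesgue_on {0..1}. (tconv f f x)\<^sup>2) powr (1/4) * lp_norm (4/3) (fourier_coeff K)"
    using sum_fourier_coeff_le_Holder[OF pdf summable \<open>finite F\<close>] by (simp add: lp_norm_def)
  finally show "1 \<le> (LINT x|lebesgue_on {0..1}. (tconv f f x)\<^sup>2) powr (1/4) * lp_norm (4/3) (fourier_coeff K) + e"
    using approx by linarith
qed

lemma integral_square_le_esssup:
  fixes g :: "'a \<Rightarrow> real"
  assumes "integrable M g" "integrable M (\<lambda>x. (g x)\<^sup>2)"
    and nonneg: "AE x in M. 0 \<le> g x" and "integral\<^sup>L M g = 1"
  shows "ereal (LINT x|M. (g x)\<^sup>2) \<le> esssup M (\<lambda>x. ereal \<bar>g x\<bar>)"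
proof (cases "esssup M (\<lambda>x. ereal \<bar>g x\<bar>)")
  case (real s)
  have "AE x in M. (g x)\<^sup>2 \<le> s * g x"
    using esssup_AE[of "\<lambda>x. ereal \<bar>g x\<bar>" M] nonneg
  proof eventually_elim
    case (elim x)
    then show ?case using real by (simp add: power2_eq_square mult_right_mono)
  qed
  then have "(LINT x|M. (g x)\<^sup>2) \<le> (LINT x|M. s * g x)"
    using assms by (intro integral_mono_AE) auto
  then show ?thesis using real assms(4) by simp
next
  case MInf
  have "AE x in M. g x = 0"
    using esssup_AE[of "\<lambda>x. ereal \<bar>g x\<bar>" M] by eventually_elim (simp add: MInf)
  then have "integral\<^sup>L M g = 0" by (simp add: integral_eq_zero_AE)
  then show ?thesis using assms(4) by simp
qed simp

lemma tLp_norm_2_power2: "(tLp_norm 2 h)\<^sup>2 = (LINT x|lebesgue_on {0..1}. (h x)\<^sup>2)"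
proof -
  have "0 \<le> (LINT x|lebesgue_on {0..1}. (h x)\<^sup>2)" by (intro integral_nonneg_AE) simp
  moreover have "(\<lambda>x. \<bar>h x\<bar> powr 2) = (\<lambda>x. (h x)\<^sup>2)" by (simp add: fun_eq_iff)
  ultimately show ?thesis by (simp add: tLp_norm_def powr_half_sqrt)
qed

lemma powr_neg_le_of_one_le_mult_powr:
  fixes a b r :: real
  assumes "0 \<le> a" "0 < r" and le: "1 \<le> a powr (1/r) * b"
  shows "b powr (-r) \<le> a"
proof -
  have "0 < b" using le by (smt (verit) mult_nonneg_nonpos powr_ge_zero)
  then have "1 / b \<le> a powr (1/r)" using le by (simp add: divide_le_eq)
  then have "(1 / b) powr r \<le> (a powr (1/r)) powr r" using \<open>0 < b\<close> \<open>0 < r\<close> by (intro powr_mono2) auto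
  also have "\<dots> = a" using assms(1,2) by (simp add: powr_powr)
  finally show ?thesis using \<open>0 < b\<close> by (simp add: powr_minus_divide powr_divide)
qed

theorem proposition2p7:
  fixes K f :: "real \<Rightarrow> real"
  assumes "continuous_on UNIV K" and "periodic1 K"
    and "\<And>x. x \<in> {-1/4..1/4} \<Longrightarrow> K x \<ge> 1"
    and "is_pdf f" and "supported_quarter f"
  shows "tLinf_norm (tconv f f) \<ge> ereal ((tLp_norm 2 (tconv f f))\<^sup>2)
         \<and> (lp_summable (4/3) (fourier_coeff K) \<longrightarrow>
              (tLp_norm 2 (tconv f f))\<^sup>2 \<ge> (lp_norm (4/3) (fourier_coeff K)) powr (-4))"
proof (intro conjI impI)
  show "ereal ((tLp_norm 2 (tconv f f))\<^sup>2) \<le> tLinf_norm (tconv f f)"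
    unfolding tLp_norm_2_power2 tLinf_norm_def
    using is_pdf_integrable_tconv[OF \<open>is_pdf f\<close>] is_pdf_tconv_nonneg[OF \<open>is_pdf f\<close>]
      is_pdf_integral_tconv[OF \<open>is_pdf f\<close>]
    by (intro integral_square_le_esssup) auto
  assume "lp_summable (4/3) (fourier_coeff K)"
  then have "1 \<le> (LINT x|lebesgue_on {0..1}. (tconv f f x)\<^sup>2) powr (1/4) * lp_norm (4/3) (fourier_coeff K)"
    using one_le_L2_tconv_mult_lp_norm assms by blast
  then show "(lp_norm (4/3) (fourier_coeff K)) powr (-4) \<le> (tLp_norm 2 (tconv f f))\<^sup>2"
    unfolding tLp_norm_2_power2
    by (intro powr_neg_le_of_one_le_mult_powr[where r = 4, simplified]) (auto intro: integral_nonneg_AE)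
qed

end
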